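(* In the setting described in the context, RLO-CCU-DG is feasible if and only if $\sum_{j\in J}a_{ij}\hat{x}_j\ge b_i$ for all $i\in I$ and $\Theta\cap\Omega\neq\varnothing$.
   Context: Let $I=\{1,\dots,m\}$, $J=\{1,\dots,n\}$. Given are $a_{ij}\in\mathbb{R}$, $b\in\mathbb{R}^m$, index sets $J_i\subseteq J$, nonnegative numbers $\alpha_{ij}$ ($j\in J_i,i\in I$), an observed point $\hat{x}\in\mathbb{R}^n$, and a convex set $\Omega\subseteq\mathbb{R}^m$. For $i\in I$ and $x\in\mathbb{R}^n$ let $j^i_1(x),\dots,j^i_{|J_i|}(x)$ order $J_i$ so that $\alpha_{ij^i_k(x)}|x_{j^i_k(x)}|$ is the $k$-th largest element of $\{\alpha_{ij}|x_j|\}_{j\in J_i}$, and for $\Gamma_i\in[0,|J_i|]$ let $P_i(\Gamma_i,x)=\sum_{k=1}^{\lfloor\Gamma_i\rfloor}\alpha_{ij^i_k(x)}|x_{j^i_k(x)}|+(\Gamma_i-\lfloor\Gamma_i\rfloor)\alpha_{ij^i_{\lceil\Gamma_i\rceil}(x)}|x_{j^i_{\lceil\Gamma_i\rceil}(x)}|$ (last term $0$ for integer $\Gamma_i$). Let $s_i=\sum_{j\in J}a_{ij}\hat{x}_j-b_i$, $\hat{I}=\{i\in I:0\le s_i\le\sum_{j\in J_i}\alpha_{ij}|\hat{x}_j|\}$, and for $i\in\hat{I}$ let $\underline{\Gamma}_i=\min\{\sum_{j\in J_i}w_j:\sum_{j\in J_i}\alpha_{ij}|\hat{x}_j|w_j=s_i,\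 0\le w_j\le1\}$, so $s_i=P_i(\underline{\Gamma}_i,\hat{x})$. Standing assumption: for each $i\in\hat{I}$, $\underline{\Gamma}_i$ is the unique $\Gamma_i\in[0,|J_i|]$ with $s_i=P_i(\Gamma_i,\hat{x})$. Let $\Theta=\{\Gamma\in\mathbb{R}^m:\Gamma_i\in[0,\underline{\Gamma}_i]\ \forall i\in\hat{I};\ \Gamma_i\in[0,|J_i|]\ \forall i\in I\setminus\hat{I}\}$. The problem RLO-CCU-DG is \[ \min_{\Gamma,c,u,y,z,\pi,\varphi,\lambda,\mu}\ \sum_{j\in J}c_j\hat{x}_j-\sum_{i\in I}b_i\pi_i \] subject to: $\Gamma\in\Omega$; $\alpha_{ij}\hat{x}_j+u_{ij}\ge0$ and $-\alpha_{ij}\hat{x}_j+u_{ij}\ge0$ ($j\in J_i,i\in I$); $y_{ij}+z_i\ge u_{ij}$ ($j\in J_i,i\in I$); $\sum_{j\in J}a_{ij}\hat{x}_j-\sum_{j\in J_i}y_{ij}-\Gamma_iz_i\ge b_i$ ($i\in I$); $y_{ij},z_i\ge0$; $0\le\Gamma_i\le|J_i|$ ($i\in I$); $\sum_{i\in I}\pi_i=1$; $\sum_{i\in I}a_{ij}\pi_i+\sum_{i\in I:j\in J_i}\alpha_{ij}(\lambda_{ij}-\mu_{ij})=c_j$ ($j\in J$); $\varphi_{ij}\le\pi_i$ and $\varphi_{ij}=\lambda_{ij}+\mu_{ij}$ ($j\in J_i,i\in I$); $\sum_{j\in J_i}\varphi_{ij}\le\Gamma_i\pi_i$ ($i\in I$);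 $\pi_i,\varphi_{ij},\lambda_{ij},\mu_{ij}\ge0$ ($j\in J_i,i\in I$). *)

theory Defs
  imports "HOL-Analysis.Analysis"
begin

text \<open>Index sets: I = UNIV :: 'm (finite, |I| = m), J = UNIV :: 'n (finite, |J| = n).
  The data: a i j, b i, index sets Js i \<subseteq> J, weights al i j, observed point xh.\<close>

text \<open>Values alpha_ij |x_j| (j in J_i) listed in nonincreasing order; the k-th largest
  (k = 1,2,...) is entry k-1 of this list.\<close>
definition sorted_vals :: "('m \<Rightarrow> 'n::linorder \<Rightarrow> real) \<Rightarrow> ('m \<Rightarrow> 'n set) \<Rightarrow> 'm \<Rightarrow> ('n \<Rightarrow> real) \<Rightarrow> real list" where
  "sorted_vals al Js i x = rev (sort (map (\<lambda>j. al i j * \<bar>x j\<bar>) (sorted_list_of_set (Js i))))"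

definition Pfun :: "('m \<Rightarrow> 'n::linorder \<Rightarrow> real) \<Rightarrow> ('m \<Rightarrow> 'n set) \<Rightarrow> 'm \<Rightarrow> real \<Rightarrow> ('n \<Rightarrow> real) \<Rightarrow> real" where
  "Pfun al Js i G x =
     (\<Sum>k<nat \<lfloor>G\<rfloor>. sorted_vals al Js i x ! k)
     + (if G \<in> \<int> then 0 else (G - of_int \<lfloor>G\<rfloor>) * (sorted_vals al Js i x ! (nat \<lceil>G\<rceil> - 1)))"

definition slack :: "('m \<Rightarrow> 'n::finite \<Rightarrow> real) \<Rightarrow> ('m \<Rightarrow> real) \<Rightarrow> ('n \<Rightarrow> real) \<Rightarrow> 'm \<Rightarrow> real" where
  "slack a b xh i = (\<Sum>j\<in>UNIV. a i j * xh j) - b i"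

definition Ihat :: "('m::finite \<Rightarrow> 'n::finite \<Rightarrow> real) \<Rightarrow> ('m \<Rightarrow> real) \<Rightarrow> ('m \<Rightarrow> 'n set) \<Rightarrow> ('m \<Rightarrow> 'n \<Rightarrow> real) \<Rightarrow> ('n \<Rightarrow> real) \<Rightarrow> 'm set" where
  "Ihat a b Js al xh = {i. 0 \<le> slack a b xh i \<and> slack a b xh i \<le> (\<Sum>j\<in>Js i. al i j * \<bar>xh j\<bar>)}"

definition Gam_low :: "('m \<Rightarrow> 'n::finite \<Rightarrow> real) \<Rightarrow> ('m \<Rightarrow> real) \<Rightarrow> ('m \<Rightarrow> 'n set) \<Rightarrow> ('m \<Rightarrow> 'n \<Rightarrow> real) \<Rightarrow> ('n \<Rightarrow> real) \<Rightarrow> 'm \<Rightarrow> real" where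
  "Gam_low a b Js al xh i = Inf {\<Sum>j\<in>Js i. w j | w :: 'n \<Rightarrow> real.
      (\<Sum>j\<in>Js i. al i j * \<bar>xh j\<bar> * w j) = slack a b xh i \<and> (\<forall>j\<in>Js i. 0 \<le> w j \<and> w j \<le> 1)}"

definition Theta :: "('m::finite \<Rightarrow> 'n::finite \<Rightarrow> real) \<Rightarrow> ('m \<Rightarrow> real) \<Rightarrow> ('m \<Rightarrow> 'n set) \<Rightarrow> ('m \<Rightarrow> 'n \<Rightarrow> real) \<Rightarrow> ('n \<Rightarrow> real) \<Rightarrow> (real^'m) set" where
  "Theta a b Js al xh = {G. (\<forall>i\<in>Ihat a b Js al xh. 0 \<le> G $ i \<and> G $ i \<le> Gam_low a b Js al xh i) \<and>
                         (\<forall>i\<in>UNIV - Ihat a b Js al xh. 0 \<le> G $ i \<and> G $ i \<le> real (card (Js i)))}"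

text \<open>Feasible points of RLO-CCU-DG (the objective plays no role in feasibility).\<close>
definition RLO_CCU_DG_feasible_point ::
  "('m::finite \<Rightarrow> 'n::finite \<Rightarrow> real) \<Rightarrow> ('m \<Rightarrow> real) \<Rightarrow> ('m \<Rightarrow> 'n set) \<Rightarrow> ('m \<Rightarrow> 'n \<Rightarrow> real) \<Rightarrow> ('n \<Rightarrow> real)
   \<Rightarrow> (real^'m) set \<Rightarrow> real^'m \<Rightarrow> ('n \<Rightarrow> real) \<Rightarrow> ('m \<Rightarrow> 'n \<Rightarrow> real) \<Rightarrow> ('m \<Rightarrow> 'n \<Rightarrow> real) \<Rightarrow> ('m \<Rightarrow> real)
   \<Rightarrow> ('m \<Rightarrow> real) \<Rightarrow> ('m \<Rightarrow> 'n \<Rightarrow> real) \<Rightarrow> ('m \<Rightarrow> 'n \<Rightarrow> real) \<Rightarrow> ('m \<Rightarrow> 'n \<Rightarrow> real) \<Rightarrow> bool" where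
  "RLO_CCU_DG_feasible_point a b Js al xh \<Omega> G c u y z \<pi> \<phi> lam mu \<longleftrightarrow>
     G \<in> \<Omega>
   \<and> (\<forall>i. \<forall>j\<in>Js i. al i j * xh j + u i j \<ge> 0 \<and> - al i j * xh j + u i j \<ge> 0)
   \<and> (\<forall>i. \<forall>j\<in>Js i. y i j + z i \<ge> u i j)
   \<and> (\<forall>i. (\<Sum>j\<in>UNIV. a i j * xh j) - (\<Sum>j\<in>Js i. y i j) - G $ i * z i \<ge> b i)
   \<and> (\<forall>i. \<forall>j\<in>Js i. y i j \<ge> 0)
   \<and> (\<forall>i. z i \<ge> 0)
   \<and> (\<forall>i. 0 \<le> G $ i \<and> G $ i \<le> real (card (Js i)))
   \<and> (\<Sum>i\<in>UNIV. \<pi> i) = 1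
   \<and> (\<forall>j. (\<Sum>i\<in>UNIV. a i j * \<pi> i) + (\<Sum>i\<in>{i. j \<in> Js i}. al i j * (lam i j - mu i j)) = c j)
   \<and> (\<forall>i. \<forall>j\<in>Js i. \<phi> i j \<le> \<pi> i \<and> \<phi> i j = lam i j + mu i j)
   \<and> (\<forall>i. (\<Sum>j\<in>Js i. \<phi> i j) \<le> G $ i * \<pi> i)
   \<and> (\<forall>i. \<pi> i \<ge> 0)
   \<and> (\<forall>i. \<forall>j\<in>Js i. \<phi> i j \<ge> 0 \<and> lam i j \<ge> 0 \<and> mu i j \<ge> 0)"

definition RLO_CCU_DG_feasible ::
  "('m::finite \<Rightarrow> 'n::finite \<Rightarrow> real) \<Rightarrow> ('m \<Rightarrow> real) \<Rightarrow> ('m \<Rightarrow> 'n set) \<Rightarrow> ('m \<Rightarrow> 'n \<Rightarrow> real) \<Rightarrow> ('n \<Rightarrow> real)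
   \<Rightarrow> (real^'m) set \<Rightarrow> bool" where
  "RLO_CCU_DG_feasible a b Js al xh \<Omega> \<longleftrightarrow>
     (\<exists>G c u y z \<pi> \<phi> lam mu. RLO_CCU_DG_feasible_point a b Js al xh \<Omega> G c u y z \<pi> \<phi> lam mu)"

end

(* The dual block (pi, phi, lambda, mu, c) of RLO-CCU-DG is always feasible: take pi uniform
   and phi = lambda = mu = 0.  Feasibility is therefore decided row by row by the primal block.
   Write P_i(Gamma, x) = sum_k w_k(Gamma) v_k, where v_0 >= v_1 >= ... are the deviations
   alpha_ij |x_j| and w_k(Gamma) = min 1 (max 0 (Gamma - k)) are the fractional weights that
   select the Gamma largest of them.  By LP duality for this selection problem, row i admits
   (y_i, z_i) iff P_i(Gamma_i, xh) <= s_i; an optimal dual is z_i = v_(floor Gamma_i),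
   y_ij = max (v_j - z_i) 0.  Since P_i(., xh) is nondecreasing, the uniqueness assumption turns
   P_i(Gamma_i, xh) <= s_i into s_i >= 0 and Gamma_i <= underline Gamma_i on Ihat; outside Ihat
   a nonnegative slack exceeds the total deviation, which bounds P_i. *)

theory Submission
  imports Defs
begin

definition top_weight :: "real \<Rightarrow> nat \<Rightarrow> real" where
  "top_weight g k = min 1 (max 0 (g - real k))"

lemma top_weight_bounds: "0 \<le> top_weight g k" "top_weight g k \<le> 1"
  by (simp_all add: top_weight_def)

lemma top_weight_mono: "g1 \<le> g2 \<Longrightarrow> top_weight g1 k \<le> top_weight g2 k"
  by (simp add: top_weight_def)

lemma sum_top_weight: "0 \<le> g \<Longrightarrow> (\<Sum>k<N. top_weight g k) = min (real N) g"
  by (induction N) (auto simp: top_weight_def min_def max_def)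

lemma floor_prefix_sum_eq_top_weight_sum:
  fixes L :: "real list"
  assumes "0 \<le> g" "g \<le> real (length L)"
  shows "(\<Sum>k<nat \<lfloor>g\<rfloor>. L ! k)
           + (if g \<in> \<int> then 0 else (g - of_int \<lfloor>g\<rfloor>) * L ! (nat \<lceil>g\<rceil> - 1))
         = (\<Sum>k<length L. top_weight g k * L ! k)"
proof -
  define n where "n = nat \<lfloor>g\<rfloor>"
  have n: "real n \<le> g" "g < real n + 1" "n \<le> length L" "real n = of_int \<lfloor>g\<rfloor>"
    using assms unfolding n_def by linarith+
  have head: "(\<Sum>k<n. top_weight g k * L ! k) = (\<Sum>k<n. L ! k)"
    using n(1) by (intro sum.cong) (auto simp: top_weight_def)
  have tail_zero: "top_weight g k = 0" if "n < k" for k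
    using n(2) that by (simp add: top_weight_def)
  have tail: "(\<Sum>k\<in>{n..<length L}. top_weight g k * L ! k)
      = (if g \<in> \<int> then 0 else (g - of_int \<lfloor>g\<rfloor>) * L ! (nat \<lceil>g\<rceil> - 1))"
  proof (cases "g \<in> \<int>")
    case True
    then obtain m where "g = of_int m" by (auto elim: Ints_cases)
    then have "g = real n"
      using assms(1) unfolding n_def by simp
    then have "(\<Sum>k\<in>{n..<length L}. top_weight g k * L ! k) = 0"
      by (intro sum.neutral) (auto simp: top_weight_def)
    then show ?thesis
      using True by simp
  next
    case False
    have "real n \<noteq> g"
      using False by (metis Ints_of_nat)
    then have lt: "real n < g" using n(1) by simp
    have "g \<noteq> of_int \<lfloor>g\<rfloor>"
      using False by (metis Ints_of_int)
    then have ceil: "nat \<lceil>g\<rceil> - 1 = n"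
      using assms(1) unfolding n_def by (simp add: ceiling_altdef nat_add_distrib)
    have "n < length L" using lt assms(2) n(2) by linarith
    have w: "top_weight g n = g - real n"
      using lt n(2) unfolding top_weight_def by (simp add: min_def)
    have "{n..<length L} = insert n {Suc n..<length L}"
      using \<open>n < length L\<close> by auto
    then have "(\<Sum>k\<in>{n..<length L}. top_weight g k * L ! k) = top_weight g n * L ! n"
      using tail_zero by simp
    then show ?thesis
      using False ceil w n(4) by simp
  qed
  have "(\<Sum>k<length L. top_weight g k * L ! k)
      = (\<Sum>k<n. top_weight g k * L ! k) + (\<Sum>k\<in>{n..<length L}. top_weight g k * L ! k)"
    using n(3) by (metis atLeast0LessThan sum.atLeastLessThan_concat zero_le)
  then show ?thesis
    using head tail unfolding n_def by simp
qed

lemma top_weight_sum_mono: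
  fixes L :: "real list"
  assumes "\<And>k. k < length L \<Longrightarrow> 0 \<le> L ! k" "g1 \<le> g2"
  shows "(\<Sum>k<length L. top_weight g1 k * L ! k) \<le> (\<Sum>k<length L. top_weight g2 k * L ! k)"
  using assms by (intro sum_mono mult_right_mono top_weight_mono) auto

lemma top_weight_sum_le_dual:
  fixes L :: "real list"
  assumes cover: "\<And>k. k < length L \<Longrightarrow> L ! k \<le> y k + z"
    and "\<And>k. k < length L \<Longrightarrow> 0 \<le> y k" "0 \<le> z" "0 \<le> g"
  shows "(\<Sum>k<length L. top_weight g k * L ! k) \<le> (\<Sum>k<length L. y k) + g * z"
proof -
  have "(\<Sum>k<length L. top_weight g k * L ! k) \<le> (\<Sum>k<length L. top_weight g k * (y k + z))"
    using cover by (intro sum_mono mult_left_mono top_weight_bounds) auto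
  also have "\<dots> = (\<Sum>k<length L. top_weight g k * y k) + (\<Sum>k<length L. top_weight g k) * z"
    by (simp add: distrib_left sum.distrib sum_distrib_right)
  also have "\<dots> \<le> (\<Sum>k<length L. y k) + g * z"
    using assms top_weight_bounds[of g]
    by (intro add_mono sum_mono mult_right_mono mult_left_le_one_le) (auto simp: sum_top_weight)
  finally show ?thesis .
qed

lemma top_weight_sum_attained:
  fixes L :: "real list"
  assumes sorted: "sorted (rev L)" and nonneg: "\<And>k. k < length L \<Longrightarrow> 0 \<le> L ! k"
    and g: "0 \<le> g" "g \<le> real (length L)"
  shows "\<exists>z\<ge>0. (\<Sum>k<length L. max (L ! k - z) 0) + g * z = (\<Sum>k<length L. top_weight g k * L ! k)"
proof -
  define n where "n = nat \<lfloor>g\<rfloor>"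
  define z where "z = (if n < length L then L ! n else 0)"
  have n: "real n \<le> g" "g < real n + 1" "n \<le> length L"
    using g unfolding n_def by linarith+
  \<comment> \<open>complementary slackness, term by term\<close>
  have "max (L ! k - z) 0 = top_weight g k * (L ! k - z)" if k: "k < length L" for k
  proof (cases k n rule: linorder_cases)
    case less
    then have "z \<le> L ! k"
      using sorted_rev_nth_mono[OF sorted, of k n] nonneg k by (auto simp: z_def)
    moreover have "top_weight g k = 1" using less n(1) by (simp add: top_weight_def)
    ultimately show ?thesis by simp
  next
    case equal
    then show ?thesis using k by (simp add: z_def)
  next
    case greater
    then have "L ! k \<le> z" "top_weight g k = 0"
      using sorted_rev_nth_mono[OF sorted, of n k] k n(2) by (auto simp: z_def top_weight_def)
    then show ?thesis by simp
  qed
  then have "(\<Sum>k<length L. max (L ! k - z) 0) + g * z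
      = (\<Sum>k<length L. top_weight g k * L ! k) - (\<Sum>k<length L. top_weight g k) * z + g * z"
    by (simp add: right_diff_distrib sum_subtractf sum_distrib_right)
  also have "\<dots> = (\<Sum>k<length L. top_weight g k * L ! k)"
    using g by (simp add: sum_top_weight)
  finally show ?thesis
    using nonneg z_def by (intro exI[of _ z]) auto
qed

lemma sum_lessThan_length_nth:
  "distinct js \<Longrightarrow> (\<Sum>k<length js. f (js ! k)) = (\<Sum>j\<in>set js. f j)"
  by (simp add: sum.distinct_set_conv_list sum_list_sum_nth atLeast0LessThan)

lemma sort_map_eq_map_sort_key:
  fixes f :: "'a \<Rightarrow> 'b::linorder"
  shows "sort (map f xs) = map f (sort_key f xs)"
  by (rule properties_for_sort) (simp_all add: mset_map)

lemma sorted_vals_eq_map: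
  assumes "finite (Js i)"
  obtains js where "distinct js" "set js = Js i"
    "sorted_vals al Js i x = map (\<lambda>j. al i j * \<bar>x j\<bar>) js"
proof
  let ?js = "rev (sort_key (\<lambda>j. al i j * \<bar>x j\<bar>) (sorted_list_of_set (Js i)))"
  show "distinct ?js" "set ?js = Js i"
    using assms by simp_all
  show "sorted_vals al Js i x = map (\<lambda>j. al i j * \<bar>x j\<bar>) ?js"
    unfolding sorted_vals_def by (simp add: sort_map_eq_map_sort_key rev_map)
qed

lemma length_sorted_vals [simp]: "length (sorted_vals al Js i x) = card (Js i)"
  by (simp add: sorted_vals_def)

lemma sorted_rev_sorted_vals: "sorted (rev (sorted_vals al Js i x))"
  by (simp add: sorted_vals_def)

lemma sorted_vals_nonneg:
  assumes "\<forall>j\<in>Js i. 0 \<le> al i j" "k < card (Js i)"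
  shows "0 \<le> sorted_vals al Js i x ! k"
proof -
  have "finite (Js i)"
    using assms(2) card.infinite by fastforce
  moreover have "sorted_vals al Js i x ! k \<in> set (sorted_vals al Js i x)"
    using assms(2) by (intro nth_mem) simp
  ultimately show ?thesis
    using assms(1) by (auto simp: sorted_vals_def)
qed

lemma Pfun_eq_top_weight_sum:
  assumes "0 \<le> g" "g \<le> real (card (Js i))"
  shows "Pfun al Js i g x = (\<Sum>k<card (Js i). top_weight g k * sorted_vals al Js i x ! k)"
  unfolding Pfun_def using floor_prefix_sum_eq_top_weight_sum[of g "sorted_vals al Js i x"] assms
  by simp

lemma Pfun_mono:
  assumes "\<forall>j\<in>Js i. 0 \<le> al i j" "0 \<le> g" "g \<le> h" "h \<le> real (card (Js i))"
  shows "Pfun al Js i g x \<le> Pfun al Js i h x"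
proof -
  have "\<And>k. k < card (Js i) \<Longrightarrow> 0 \<le> sorted_vals al Js i x ! k"
    using assms(1) by (rule sorted_vals_nonneg)
  then have "(\<Sum>k<card (Js i). top_weight g k * sorted_vals al Js i x ! k)
      \<le> (\<Sum>k<card (Js i). top_weight h k * sorted_vals al Js i x ! k)"
    using top_weight_sum_mono[of "sorted_vals al Js i x" g h] assms(3) by simp
  then show ?thesis
    using assms(2-4) by (simp add: Pfun_eq_top_weight_sum)
qed

lemma Pfun_nonneg:
  assumes "\<forall>j\<in>Js i. 0 \<le> al i j" "0 \<le> g" "g \<le> real (card (Js i))"
  shows "0 \<le> Pfun al Js i g x"
proof -
  have "Pfun al Js i 0 x \<le> Pfun al Js i g x"
    using assms(1) order_refl assms(2,3) by (rule Pfun_mono)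
  then show ?thesis by (simp add: Pfun_def)
qed

lemma Pfun_le_iff_dual_feasible:
  assumes fin: "finite (Js i)" and al: "\<forall>j\<in>Js i. 0 \<le> al i j"
    and g: "0 \<le> g" "g \<le> real (card (Js i))"
  shows "Pfun al Js i g x \<le> s \<longleftrightarrow>
    (\<exists>y z. 0 \<le> z \<and> (\<forall>j\<in>Js i. 0 \<le> y j \<and> al i j * \<bar>x j\<bar> \<le> y j + z)
       \<and> (\<Sum>j\<in>Js i. y j) + g * z \<le> s)"
proof -
  define v where "v j = al i j * \<bar>x j\<bar>" for j
  obtain js where js: "distinct js" "set js = Js i" "sorted_vals al Js i x = map v js"
    using sorted_vals_eq_map[where Js = Js and i = i and al = al and x = x, OF fin]
    unfolding v_def by blast
  have len: "length js = card (Js i)"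
    using js(1,2) distinct_card by fastforce
  have mem: "js ! k \<in> Js i" if "k < card (Js i)" for k
    using that len js(2) nth_mem by fastforce
  have sum_js: "(\<Sum>k<card (Js i). f (js ! k)) = (\<Sum>j\<in>Js i. f j)" for f :: "_ \<Rightarrow> real"
    using sum_lessThan_length_nth[OF js(1)] len js(2) by simp
  have P: "Pfun al Js i g x = (\<Sum>k<card (Js i). top_weight g k * v (js ! k))"
    using g js(3) len by (simp add: Pfun_eq_top_weight_sum)
  show ?thesis
  proof
    assume le: "Pfun al Js i g x \<le> s"
    have "\<exists>z\<ge>0. (\<Sum>k<card (Js i). max (v (js ! k) - z) 0) + g * z = Pfun al Js i g x"
      using top_weight_sum_attained[of "sorted_vals al Js i x" g] sorted_rev_sorted_vals[of al Js i x]
        sorted_vals_nonneg[where Js = Js and i = i and al = al and x = x, OF al] g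
      by (simp add: js(3) len P)
    then obtain z where z: "0 \<le> z"
        "(\<Sum>k<card (Js i). max (v (js ! k) - z) 0) + g * z = Pfun al Js i g x"
      by blast
    then have "(\<Sum>j\<in>Js i. max (v j - z) 0) + g * z \<le> s"
      using le sum_js[of "\<lambda>j. max (v j - z) 0"] by simp
    then show "\<exists>y z. 0 \<le> z \<and> (\<forall>j\<in>Js i. 0 \<le> y j \<and> al i j * \<bar>x j\<bar> \<le> y j + z)
       \<and> (\<Sum>j\<in>Js i. y j) + g * z \<le> s"
      using z(1) by (intro exI[of _ "\<lambda>j. max (v j - z) 0"] exI[of _ z]) (auto simp: v_def)
  next
    assume "\<exists>y z. 0 \<le> z \<and> (\<forall>j\<in>Js i. 0 \<le> y j \<and> al i j * \<bar>x j\<bar> \<le> y j + z)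
       \<and> (\<Sum>j\<in>Js i. y j) + g * z \<le> s"
    then obtain y z where yz: "0 \<le> z" "\<forall>j\<in>Js i. 0 \<le> y j \<and> v j \<le> y j + z"
        "(\<Sum>j\<in>Js i. y j) + g * z \<le> s"
      unfolding v_def by blast
    have "Pfun al Js i g x \<le> (\<Sum>k<card (Js i). y (js ! k)) + g * z"
      using top_weight_sum_le_dual[of "map v js" "\<lambda>k. y (js ! k)" z g] yz(1,2) mem g(1)
      by (simp add: P len)
    then show "Pfun al Js i g x \<le> s"
      using yz(3) sum_js[of y] by simp
  qed
qed

lemma Gam_low_bounds:
  fixes xh :: "'n::finite \<Rightarrow> real"
  assumes "i \<in> Ihat a b Js al xh"
  shows "0 \<le> Gam_low a b Js al xh i" "Gam_low a b Js al xh i \<le> real (card (Js i))"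
proof -
  define s where "s = slack a b xh i"
  define T where "T = (\<Sum>j\<in>Js i. al i j * \<bar>xh j\<bar>)"
  define S where "S = {\<Sum>j\<in>Js i. w j | w.
      (\<Sum>j\<in>Js i. al i j * \<bar>xh j\<bar> * w j) = s \<and> (\<forall>j\<in>Js i. 0 \<le> w j \<and> w j \<le> 1)}"
  have sT: "0 \<le> s" "s \<le> T"
    using assms unfolding Ihat_def s_def T_def by auto
  define w0 :: "'n \<Rightarrow> real" where "w0 j = (if T = 0 then 0 else s / T)" for j
  have "(\<Sum>j\<in>Js i. al i j * \<bar>xh j\<bar> * w0 j) = T * (if T = 0 then 0 else s / T)"
    unfolding w0_def T_def by (simp only: sum_distrib_right)
  then have "(\<Sum>j\<in>Js i. al i j * \<bar>xh j\<bar> * w0 j) = s"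
    using sT by auto
  moreover have w0: "\<forall>j\<in>Js i. 0 \<le> w0 j \<and> w0 j \<le> 1"
    using sT unfolding w0_def by auto
  ultimately have w0_mem: "(\<Sum>j\<in>Js i. w0 j) \<in> S"
    unfolding S_def by blast
  have S_nonneg: "\<forall>t\<in>S. 0 \<le> t"
    unfolding S_def by (auto intro: sum_nonneg)
  have "Gam_low a b Js al xh i = Inf S"
    unfolding Gam_low_def S_def s_def ..
  moreover have "Inf S \<le> (\<Sum>j\<in>Js i. w0 j)"
    using w0_mem S_nonneg by (intro cInf_lower) (auto simp: bdd_below_def)
  moreover have "(\<Sum>j\<in>Js i. w0 j) \<le> real (card (Js i))"
    using w0 sum_mono[of "Js i" w0 "\<lambda>_. 1"] by simp
  moreover have "0 \<le> Inf S"
    using w0_mem S_nonneg by (intro cInf_greatest) auto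
  ultimately show "0 \<le> Gam_low a b Js al xh i" "Gam_low a b Js al xh i \<le> real (card (Js i))"
    by simp_all
qed

lemma mem_Theta_iff:
  "G \<in> Theta a b Js al xh \<longleftrightarrow>
    (\<forall>i. 0 \<le> G $ i \<and> G $ i \<le> real (card (Js i))
       \<and> (i \<in> Ihat a b Js al xh \<longrightarrow> G $ i \<le> Gam_low a b Js al xh i))"
  unfolding Theta_def using Gam_low_bounds(2) by force

lemma Pfun_le_slack_iff:
  fixes a :: "'m::finite \<Rightarrow> 'n::{finite,linorder} \<Rightarrow> real"
  assumes al: "\<forall>j\<in>Js i. 0 \<le> al i j"
    and standing: "i \<in> Ihat a b Js al xh \<Longrightarrow>
        \<forall>G \<in> {0 .. real (card (Js i))}.
          (slack a b xh i = Pfun al Js i G xh \<longleftrightarrow> G = Gam_low a b Js al xh i)"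
    and g: "0 \<le> g" "g \<le> real (card (Js i))"
  shows "Pfun al Js i g xh \<le> slack a b xh i \<longleftrightarrow>
    0 \<le> slack a b xh i \<and> (i \<in> Ihat a b Js al xh \<longrightarrow> g \<le> Gam_low a b Js al xh i)"
proof -
  have nonneg: "0 \<le> Pfun al Js i g xh"
    using al g by (rule Pfun_nonneg)
  show ?thesis
  proof (cases "i \<in> Ihat a b Js al xh")
    case True
    define \<gamma> where "\<gamma> = Gam_low a b Js al xh i"
    have \<gamma>: "0 \<le> \<gamma>" "\<gamma> \<le> real (card (Js i))"
      using Gam_low_bounds[OF True] unfolding \<gamma>_def by simp_all
    have slack_eq: "slack a b xh i = Pfun al Js i \<gamma> xh"
      using standing[OF True] \<gamma> unfolding \<gamma>_def by simp
    have "g \<le> \<gamma>" if le: "Pfun al Js i g xh \<le> slack a b xh i"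
    proof (rule ccontr)
      assume "\<not> g \<le> \<gamma>"
      then have "Pfun al Js i \<gamma> xh \<le> Pfun al Js i g xh"
        using al \<gamma>(1) g(2) by (intro Pfun_mono) auto
      then have "slack a b xh i = Pfun al Js i g xh"
        using le slack_eq by linarith
      then have "g = \<gamma>"
        using standing[OF True] g unfolding \<gamma>_def by simp
      with \<open>\<not> g \<le> \<gamma>\<close> show False by simp
    qed
    moreover have "Pfun al Js i g xh \<le> slack a b xh i" if "g \<le> \<gamma>"
      using al g(1) that \<gamma>(2) unfolding slack_eq by (rule Pfun_mono)
    ultimately show ?thesis
      using True nonneg unfolding \<gamma>_def by force
  next
    case False
    have dual: "Pfun al Js i g xh \<le> slack a b xh i \<longleftrightarrow>
        (\<exists>y z. 0 \<le> z \<and> (\<forall>j\<in>Js i. 0 \<le> y j \<and> al i j * \<bar>xh j\<bar> \<le> y j + z)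
           \<and> (\<Sum>j\<in>Js i. y j) + g * z \<le> slack a b xh i)"
      using finite[of "Js i"] al g by (rule Pfun_le_iff_dual_feasible)
    have "Pfun al Js i g xh \<le> slack a b xh i" if "0 \<le> slack a b xh i"
      using False that al unfolding dual
      by (auto simp: Ihat_def intro!: exI[of _ "\<lambda>j. al i j * \<bar>xh j\<bar>"] exI[of _ 0])
    then show ?thesis
      using False nonneg by force
  qed
qed

lemma RLO_CCU_DG_feasible_iff:
  fixes a :: "'m::finite \<Rightarrow> 'n::{finite,linorder} \<Rightarrow> real"
  assumes al: "\<And>i j. j \<in> Js i \<Longrightarrow> 0 \<le> al i j"
  shows "RLO_CCU_DG_feasible a b Js al xh \<Omega> \<longleftrightarrow>
    (\<exists>G\<in>\<Omega>. \<forall>i. 0 \<le> G $ i \<and> G $ i \<le> real (card (Js i))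
       \<and> Pfun al Js i (G $ i) xh \<le> slack a b xh i)"
    (is "_ \<longleftrightarrow> (\<exists>G\<in>\<Omega>. \<forall>i. ?row G i)")
proof -
  have dual: "?row G i \<longleftrightarrow> 0 \<le> G $ i \<and> G $ i \<le> real (card (Js i)) \<and>
      (\<exists>y z. 0 \<le> z \<and> (\<forall>j\<in>Js i. 0 \<le> y j \<and> al i j * \<bar>xh j\<bar> \<le> y j + z)
         \<and> (\<Sum>j\<in>Js i. y j) + G $ i * z \<le> slack a b xh i)" for G i
    using Pfun_le_iff_dual_feasible[OF finite, of Js i al "G $ i" xh "slack a b xh i"] al by blast
  have abs_eq: "\<bar>al i j * xh j\<bar> = al i j * \<bar>xh j\<bar>" if "j \<in> Js i" for i j
    using al[OF that] by (simp add: abs_mult)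
  show ?thesis
  proof
    assume "RLO_CCU_DG_feasible a b Js al xh \<Omega>"
    then obtain G c u y z \<pi> \<phi> lam mu
      where P: "RLO_CCU_DG_feasible_point a b Js al xh \<Omega> G c u y z \<pi> \<phi> lam mu"
      unfolding RLO_CCU_DG_feasible_def by blast
    have "?row G i" for i
      unfolding dual
    proof (intro conjI exI)
      have "\<bar>al i j * xh j\<bar> \<le> u i j" "u i j \<le> y i j + z i" if "j \<in> Js i" for j
        using P that unfolding RLO_CCU_DG_feasible_point_def by fastforce+
      then show "\<forall>j\<in>Js i. 0 \<le> y i j \<and> al i j * \<bar>xh j\<bar> \<le> y i j + z i"
        using P abs_eq unfolding RLO_CCU_DG_feasible_point_def by fastforce
      have "b i \<le> (\<Sum>j\<in>UNIV. a i j * xh j) - (\<Sum>j\<in>Js i. y i j) - G $ i * z i"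
        using P unfolding RLO_CCU_DG_feasible_point_def by blast
      then show "(\<Sum>j\<in>Js i. y i j) + G $ i * z i \<le> slack a b xh i"
        unfolding slack_def by linarith
    qed (use P in \<open>auto simp: RLO_CCU_DG_feasible_point_def\<close>)
    then show "\<exists>G\<in>\<Omega>. \<forall>i. ?row G i"
      using P unfolding RLO_CCU_DG_feasible_point_def by blast
  next
    assume "\<exists>G\<in>\<Omega>. \<forall>i. ?row G i"
    then obtain G y z where G: "G \<in> \<Omega>" "\<And>i. 0 \<le> G $ i" "\<And>i. G $ i \<le> real (card (Js i))"
      and yz: "\<And>i. 0 \<le> z i" "\<And>i j. j \<in> Js i \<Longrightarrow> 0 \<le> y i j \<and> al i j * \<bar>xh j\<bar> \<le> y i j + z i"
        "\<And>i. (\<Sum>j\<in>Js i. y i j) + G $ i * z i \<le> slack a b xh i"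
      unfolding dual by metis
    define \<pi> :: "'m \<Rightarrow> real" where "\<pi> i = 1 / real CARD('m)" for i
    have "RLO_CCU_DG_feasible_point a b Js al xh \<Omega> G (\<lambda>j. \<Sum>i\<in>UNIV. a i j * \<pi> i)
        (\<lambda>i j. al i j * \<bar>xh j\<bar>) y z \<pi> (\<lambda>i j. 0) (\<lambda>i j. 0) (\<lambda>i j. 0)"
    proof -
      have "b i \<le> (\<Sum>j\<in>UNIV. a i j * xh j) - (\<Sum>j\<in>Js i. y i j) - G $ i * z i" for i
        using yz(3)[of i] unfolding slack_def by linarith
      then show ?thesis
        unfolding RLO_CCU_DG_feasible_point_def
        using G yz abs_eq[symmetric] al by (auto simp: \<pi>_def)
    qed
    then show "RLO_CCU_DG_feasible a b Js al xh \<Omega>"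
      unfolding RLO_CCU_DG_feasible_def by blast
  qed
qed

theorem proposition4:
  fixes a :: "'m::finite \<Rightarrow> 'n::{finite,linorder} \<Rightarrow> real"
    and b :: "'m \<Rightarrow> real"
    and Js :: "'m \<Rightarrow> 'n set"
    and al :: "'m \<Rightarrow> 'n \<Rightarrow> real"
    and xh :: "'n \<Rightarrow> real"
    and \<Omega> :: "(real^'m) set"
  assumes al_nonneg: "\<And>i j. j \<in> Js i \<Longrightarrow> al i j \<ge> 0"
    and \<Omega>_convex: "convex \<Omega>"
    and standing: "\<And>i. i \<in> Ihat a b Js al xh \<Longrightarrow>
        \<forall>G \<in> {0 .. real (card (Js i))}.
          (slack a b xh i = Pfun al Js i G xh \<longleftrightarrow> G = Gam_low a b Js al xh i)"
  shows "RLO_CCU_DG_feasible a b Js al xh \<Omega> \<longleftrightarrow>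
           (\<forall>i. (\<Sum>j\<in>UNIV. a i j * xh j) \<ge> b i) \<and> Theta a b Js al xh \<inter> \<Omega> \<noteq> {}"
proof -
  have row: "0 \<le> G $ i \<and> G $ i \<le> real (card (Js i)) \<and> Pfun al Js i (G $ i) xh \<le> slack a b xh i
      \<longleftrightarrow> 0 \<le> slack a b xh i \<and> 0 \<le> G $ i \<and> G $ i \<le> real (card (Js i))
          \<and> (i \<in> Ihat a b Js al xh \<longrightarrow> G $ i \<le> Gam_low a b Js al xh i)" for G i
    using Pfun_le_slack_iff[of Js i al a b xh "G $ i"] al_nonneg standing by blast
  have "RLO_CCU_DG_feasible a b Js al xh \<Omega> \<longleftrightarrow>
      (\<exists>G\<in>\<Omega>. \<forall>i. 0 \<le> G $ i \<and> G $ i \<le> real (card (Js i))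
         \<and> Pfun al Js i (G $ i) xh \<le> slack a b xh i)"
    using al_nonneg by (rule RLO_CCU_DG_feasible_iff)
  also have "\<dots> \<longleftrightarrow> (\<exists>G\<in>\<Omega>. (\<forall>i. 0 \<le> slack a b xh i) \<and> G \<in> Theta a b Js al xh)"
    unfolding row mem_Theta_iff by blast
  also have "\<dots> \<longleftrightarrow> (\<forall>i. (\<Sum>j\<in>UNIV. a i j * xh j) \<ge> b i) \<and> Theta a b Js al xh \<inter> \<Omega> \<noteq> {}"
    unfolding slack_def by auto
  finally show ?thesis .
qed

end
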